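(* Let $q$ be a prime power, $b$ a positive integer, and $\boldsymbol{B}$ an $M\times M$ matrix with nonnegative integer entries. Then \[ N_b(\boldsymbol{B})\ge\begin{cases}\dfrac{2q^b}{(q^b-1)M^2}\sum_{i<j}[\boldsymbol{B}]_{ij}, & \text{if } M\equiv 0\pmod{q^b},\\[2mm] \dfrac{2q^b}{(q^b-1)(M^2-1)}\sum_{i<j}[\boldsymbol{B}]_{ij}, & \text{if } M\equiv 1\pmod{q^b},\\[2mm] \dfrac{2q^b}{M^2(q^b-1)-m(q^b-m)}\sum_{i<j}[\boldsymbol{B}]_{ij}, & \text{if } M\equiv m\pmod{q^b},\ m>1.\end{cases} \]
   Context: For $\boldsymbol{z}=(z_0,\ldots,z_{n-1}),\boldsymbol{w}\in\mathbb{F}_q^n$, the $b$-symbol distance $d_b(\boldsymbol{z},\boldsymbol{w})$ is the number of $i\in\{0,\ldots,n-1\}$ with $(z_i,\ldots,z_{i+b-1})\ne(w_i,\ldots,w_{i+b-1})$ (indices mod $n$). $N_b(\boldsymbol{B})$ is the smallest $r$ such that there exist $\boldsymbol{p}_1,\ldots,\boldsymbol{p}_M\in\mathbb{F}_q^r$ (in some ordering) with $d_b(\boldsymbol{p}_i,\boldsymbol{p}_j)\ge[\boldsymbol{B}]_{ij}$ for all $i,j$. In the third case $m$ denotes the residue of $M$ modulo $q^b$, with $1<m<q^b$. *)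

theory Defs
  imports Complex_Main
begin

definition bdist :: "nat \<Rightarrow> 'a list \<Rightarrow> 'a list \<Rightarrow> nat" where
  "bdist b z w = card {i. i < length z \<and>
      (\<exists>k<b. z ! ((i + k) mod length z) \<noteq> w ! ((i + k) mod length z))}"

definition Nb :: "'a itself \<Rightarrow> nat \<Rightarrow> nat \<Rightarrow> (nat \<Rightarrow> nat \<Rightarrow> nat) \<Rightarrow> nat" where
  "Nb _ b M B = (LEAST r. \<exists>p :: nat \<Rightarrow> 'a list.
      (\<forall>i<M. length (p i) = r) \<and>
      (\<forall>i<M. \<forall>j<M. i \<noteq> j \<longrightarrow> bdist b (p i) (p j) \<ge> B i j))"

end

theory Submission
  imports Defs
begin

text \<open>At every cyclic position \<open>t\<close> the \<open>M\<close> codewords show \<open>b\<close>-symbols taking at most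
  \<open>Q = q\<^sup>b\<close> values; if \<open>n\<^sub>v\<close> codewords show the value \<open>v\<close>, then \<open>(M\<^sup>2 - \<Sum> n\<^sub>v\<^sup>2) / 2\<close> pairs
  differ at \<open>t\<close>. Since \<open>\<Sum> n\<^sub>v\<^sup>2\<close> is smallest for balanced fibres, \<open>Q \<Sum> n\<^sub>v\<^sup>2 \<ge> M\<^sup>2 + m (Q - m)\<close>
  with \<open>m = M mod Q\<close>. Summing the distance constraints over all pairs and exchanging the
  sums over pairs and positions gives \<open>2 Q S \<le> r (M\<^sup>2 (Q - 1) - m (Q - m))\<close>, where \<open>S\<close> is the
  sum of the \<open>B i j\<close> over \<open>i < j\<close>, for every code of length \<open>r\<close>, in particular for \<open>r = N\<^sub>b(B)\<close>.\<close>

definition window :: "nat \<Rightarrow> 'a list \<Rightarrow> nat \<Rightarrow> 'a list" where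
  "window b z t = map (\<lambda>k. z ! ((t + k) mod length z)) [0..<b]"

lemma bdist_eq_sum_windows:
  assumes "length w = length z"
  shows "bdist b z w = (\<Sum>t<length z. of_bool (window b z t \<noteq> window b w t))"
proof -
  have "bdist b z w = card ({..<length z} \<inter> {t. window b z t \<noteq> window b w t})"
    using assms unfolding bdist_def window_def by (simp add: Int_def Bex_def)
  then show ?thesis by simp
qed

lemma card_differences_le_bdist:
  assumes "b > 0" and "length w = length z"
  shows "card {t. t < length z \<and> z ! t \<noteq> w ! t} \<le> bdist b z w"
  unfolding bdist_def
proof (rule card_mono)
  show "{t. t < length z \<and> z ! t \<noteq> w ! t} \<subseteq> {t. t < length z \<and>
      (\<exists>k<b. z ! ((t + k) mod length z) \<noteq> w ! ((t + k) mod length z))}"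
    using assms(1) by force
qed simp

lemma card_lists_length_le:
  assumes "\<forall>xs\<in>X. length xs = n"
  shows "card (X :: 'a::finite list set) \<le> card (UNIV :: 'a set) ^ n"
proof -
  have "X \<subseteq> {xs. set xs \<subseteq> UNIV \<and> length xs = n}" using assms by auto
  then have "card X \<le> card {xs. set xs \<subseteq> (UNIV :: 'a set) \<and> length xs = n}"
    by (intro card_mono finite_lists_length_eq) auto
  then show ?thesis using card_lists_length_eq[of "UNIV :: 'a set" n] by simp
qed

lemma double_sum_pairs_less:
  fixes g :: "nat \<Rightarrow> nat \<Rightarrow> 'b::comm_semiring_1"
  assumes "\<And>i j. g i j = g j i" and "\<And>i. g i i = 0"
  shows "2 * (\<Sum>j<M. \<Sum>i<j. g i j) = (\<Sum>i<M. \<Sum>j<M. g i j)"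
proof (induction M)
  case (Suc M)
  have "(\<Sum>i<Suc M. \<Sum>j<Suc M. g i j)
      = (\<Sum>i<M. \<Sum>j<M. g i j) + (\<Sum>i<M. g i M) + (\<Sum>j<M. g M j)"
    by (simp add: sum.distrib assms(2) add_ac)
  also have "(\<Sum>j<M. g M j) = (\<Sum>i<M. g i M)"
    using assms(1) by simp
  finally show ?case
    using Suc by (simp add: algebra_simps mult_2)
qed simp

lemma sum_card_fibres:
  assumes "finite A"
  shows "(\<Sum>v\<in>f ` A. card {x\<in>A. f x = v}) = card A"
  using sum.image_gen[OF assms, of "\<lambda>_. 1::nat" f] by simp

lemma sum_card_fibres_square:
  assumes "finite A"
  shows "(\<Sum>x\<in>A. card {y\<in>A. f y = f x}) = (\<Sum>v\<in>f ` A. card {x\<in>A. f x = v} ^ 2)"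
proof -
  have "(\<Sum>x\<in>A. card {y\<in>A. f y = f x})
      = (\<Sum>v\<in>f ` A. \<Sum>x\<in>{x\<in>A. f x = v}. card {y\<in>A. f y = f x})"
    by (rule sum.image_gen[OF assms])
  also have "\<dots> = (\<Sum>v\<in>f ` A. card {x\<in>A. f x = v} ^ 2)"
    by (intro sum.cong refl) (simp add: power2_eq_square)
  finally show ?thesis .
qed

lemma sum_squares_ge_balanced:
  fixes n :: "'v \<Rightarrow> nat"
  assumes "card V \<le> Q"
  defines "M \<equiv> sum n V"
  shows "int M ^ 2 + int (M mod Q) * (int Q - int (M mod Q))
    \<le> int Q * (\<Sum>v\<in>V. int (n v) ^ 2)"
proof -
  define k where "k = M div Q"
  define m where "m = M mod Q"
  have M_eq: "int M = int k * int Q + int m"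
    unfolding k_def m_def by (metis div_mult_mod_eq of_nat_add of_nat_mult)
  \<comment> \<open>tight exactly at \<open>x = k\<close> and \<open>x = k + 1\<close>, so balanced fibres are extremal\<close>
  have tangent: "(2 * int k + 1) * x - int k * (int k + 1) \<le> x ^ 2" for x :: int
  proof -
    have "0 \<le> (x - int k) * (x - int k - 1)"
      by (cases "x \<le> int k") (auto intro: mult_nonpos_nonpos)
    then show ?thesis by (simp add: algebra_simps power2_eq_square)
  qed
  have "(2 * int k + 1) * int M - int Q * (int k * (int k + 1))
      \<le> (2 * int k + 1) * int M - int (card V) * (int k * (int k + 1))"
    using assms(1) by (intro diff_left_mono mult_right_mono) auto
  also have "\<dots> = (\<Sum>v\<in>V. (2 * int k + 1) * int (n v) - int k * (int k + 1))"
    unfolding M_def by (simp add: sum_subtractf sum_distrib_left)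
  also have "\<dots> \<le> (\<Sum>v\<in>V. int (n v) ^ 2)"
    by (intro sum_mono tangent)
  finally have "int Q * ((2 * int k + 1) * int M - int Q * (int k * (int k + 1)))
      \<le> int Q * (\<Sum>v\<in>V. int (n v) ^ 2)"
    by (intro mult_left_mono) auto
  moreover have "int Q * ((2 * int k + 1) * int M - int Q * (int k * (int k + 1)))
      = int M ^ 2 + int m * (int Q - int m)"
    unfolding M_eq by (simp add: algebra_simps power2_eq_square)
  ultimately show ?thesis unfolding m_def by simp
qed

lemma sum_pairs_distinct_values_le:
  fixes f :: "nat \<Rightarrow> 'b"
  assumes "card (f ` {..<M}) \<le> Q"
  shows "int Q * (2 * (\<Sum>j<M. \<Sum>i<j. of_bool (f i \<noteq> f j)))
    \<le> int M ^ 2 * (int Q - 1) - int (M mod Q) * (int Q - int (M mod Q))"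
proof -
  define n where "n v = card {i\<in>{..<M}. f i = v}" for v
  have row: "(\<Sum>j<M. of_bool (f i \<noteq> f j)) = int M - int (card {j\<in>{..<M}. f j = f i})" for i
  proof -
    have "(\<Sum>j<M. of_bool (f i \<noteq> f j)) = (\<Sum>j<M. 1 - of_bool (f j = f i) :: int)"
      by (intro sum.cong) auto
    also have "\<dots> = int M - int (card {j\<in>{..<M}. f j = f i})"
      by (simp add: sum_subtractf Int_def)
    finally show ?thesis .
  qed
  have "2 * (\<Sum>j<M. \<Sum>i<j. of_bool (f i \<noteq> f j))
      = (\<Sum>i<M. \<Sum>j<M. of_bool (f i \<noteq> f j) :: int)"
    by (rule double_sum_pairs_less) auto
  also have "\<dots> = int M ^ 2 - int (\<Sum>i<M. card {j\<in>{..<M}. f j = f i})"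
    by (simp add: row sum_subtractf power2_eq_square)
  also have "\<dots> = int M ^ 2 - (\<Sum>v\<in>f ` {..<M}. int (n v) ^ 2)"
    unfolding n_def sum_card_fibres_square[OF finite_lessThan] by simp
  finally have pairs: "2 * (\<Sum>j<M. \<Sum>i<j. of_bool (f i \<noteq> f j))
      = int M ^ 2 - (\<Sum>v\<in>f ` {..<M}. int (n v) ^ 2)" .
  have "sum n (f ` {..<M}) = M"
    using sum_card_fibres[of "{..<M}" f] unfolding n_def by simp
  then have "int M ^ 2 + int (M mod Q) * (int Q - int (M mod Q))
      \<le> int Q * (\<Sum>v\<in>f ` {..<M}. int (n v) ^ 2)"
    using sum_squares_ge_balanced[OF assms, of n] by simp
  then show ?thesis
    unfolding pairs by (simp add: algebra_simps)
qed

lemma ex_code_bdist_ge: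
  fixes B :: "nat \<Rightarrow> nat \<Rightarrow> nat"
  assumes "b > 0"
  shows "\<exists>r (p :: nat \<Rightarrow> 'a::zero_neq_one list). (\<forall>i<M. length (p i) = r) \<and>
    (\<forall>i<M. \<forall>j<M. i \<noteq> j \<longrightarrow> B i j \<le> bdist b (p i) (p j))"
proof -
  define T where "T = (\<Sum>i<M. \<Sum>j<M. B i j)"
  define p :: "nat \<Rightarrow> 'a list" where "p i = map (\<lambda>t. of_bool (t div T = i)) [0..<M * T]" for i
  have "B i j \<le> bdist b (p i) (p j)" if "i < M" "j < M" "i \<noteq> j" for i j
  proof -
    have "B i j \<le> (\<Sum>j<M. B i j)"
      using that(2) by (intro member_le_sum) auto
    also have "\<dots> \<le> T"
      unfolding T_def using that(1) by (intro member_le_sum[where f = "\<lambda>i. \<Sum>j<M. B i j"]) auto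
    finally have "B i j \<le> card {i * T..<i * T + T}" by simp
    also have "\<dots> \<le> card {t. t < length (p i) \<and> p i ! t \<noteq> p j ! t}"
    proof (rule card_mono)
      have "i * T + T \<le> M * T"
        using that(1) mult_le_mono1[of "Suc i" M T] by simp
      moreover have "t div T = i" if "t \<in> {i * T..<i * T + T}" for t
        using that by (intro div_nat_eqI) (auto simp: mult.commute)
      ultimately show "{i * T..<i * T + T} \<subseteq> {t. t < length (p i) \<and> p i ! t \<noteq> p j ! t}"
        using \<open>i \<noteq> j\<close> by (auto simp: p_def)
    qed simp
    also have "\<dots> \<le> bdist b (p i) (p j)"
      by (rule card_differences_le_bdist[OF assms]) (simp add: p_def)
    finally show ?thesis .
  qed
  then show ?thesis
    by (intro exI[of _ "M * T"] exI[of _ p]) (auto simp: p_def)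
qed

lemma Nb_attained:
  fixes F :: "'a::zero_neq_one itself"
  assumes "b > 0"
  obtains p :: "nat \<Rightarrow> 'a list"
  where "\<forall>i<M. length (p i) = Nb F b M B"
    and "\<forall>i<M. \<forall>j<M. i \<noteq> j \<longrightarrow> B i j \<le> bdist b (p i) (p j)"
  using LeastI_ex[OF ex_code_bdist_ge[OF assms, where 'a = 'a, of M B]] that
  unfolding Nb_def by blast

lemma code_length_bound:
  fixes p :: "nat \<Rightarrow> 'a::finite list" and B :: "nat \<Rightarrow> nat \<Rightarrow> nat"
  assumes len: "\<forall>i<M. length (p i) = r"
    and dist: "\<forall>i<M. \<forall>j<M. i \<noteq> j \<longrightarrow> B i j \<le> bdist b (p i) (p j)"
  defines "Q \<equiv> card (UNIV :: 'a set) ^ b"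
  shows "int Q * (2 * (\<Sum>j<M. \<Sum>i<j. int (B i j)))
    \<le> int r * (int M ^ 2 * (int Q - 1) - int (M mod Q) * (int Q - int (M mod Q)))"
proof -
  define differ :: "nat \<Rightarrow> nat \<Rightarrow> nat \<Rightarrow> int"
    where "differ t i j = of_bool (window b (p i) t \<noteq> window b (p j) t)" for t i j
  have "(\<Sum>j<M. \<Sum>i<j. int (B i j)) \<le> (\<Sum>j<M. \<Sum>i<j. int (bdist b (p i) (p j)))"
    using dist by (intro sum_mono) auto
  also have "\<dots> = (\<Sum>j<M. \<Sum>i<j. \<Sum>t<r. differ t i j)"
    using len by (intro sum.cong refl) (simp add: bdist_eq_sum_windows differ_def)
  also have "\<dots> = (\<Sum>t<r. \<Sum>j<M. \<Sum>i<j. differ t i j)"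
    by (simp add: sum.swap[of _ "{..<r}"])
  finally have "int Q * (2 * (\<Sum>j<M. \<Sum>i<j. int (B i j)))
      \<le> int Q * (2 * (\<Sum>t<r. \<Sum>j<M. \<Sum>i<j. differ t i j))"
    by (intro mult_left_mono) auto
  also have "\<dots> = (\<Sum>t<r. int Q * (2 * (\<Sum>j<M. \<Sum>i<j. differ t i j)))"
    by (simp only: sum_distrib_left)
  also have "\<dots> \<le> (\<Sum>t<r. int M ^ 2 * (int Q - 1) - int (M mod Q) * (int Q - int (M mod Q)))"
  proof (intro sum_mono)
    fix t
    have "card ((\<lambda>i. window b (p i) t) ` {..<M}) \<le> Q"
      unfolding Q_def by (rule card_lists_length_le) (simp add: window_def)
    then show "int Q * (2 * (\<Sum>j<M. \<Sum>i<j. differ t i j))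
        \<le> int M ^ 2 * (int Q - 1) - int (M mod Q) * (int Q - int (M mod Q))"
      unfolding differ_def by (rule sum_pairs_distinct_values_le)
  qed
  finally show ?thesis by simp
qed

lemma Nb_lower_bound:
  fixes F :: "'a::{finite,zero_neq_one} itself" and M :: nat and B :: "nat \<Rightarrow> nat \<Rightarrow> nat"
  assumes "b > 0"
  defines "Q \<equiv> real (card (UNIV :: 'a set) ^ b)" and "m \<equiv> M mod card (UNIV :: 'a set) ^ b"
  shows "2 * Q / (real M ^ 2 * (Q - 1) - real m * (Q - real m)) * real (\<Sum>j<M. \<Sum>i<j. B i j)
    \<le> real (Nb F b M B)"
proof -
  define D where "D = real M ^ 2 * (Q - 1) - real m * (Q - real m)"
  define S where "S = real (\<Sum>j<M. \<Sum>i<j. B i j)"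
  obtain p :: "nat \<Rightarrow> 'a list" where "\<forall>i<M. length (p i) = Nb F b M B"
    and "\<forall>i<M. \<forall>j<M. i \<noteq> j \<longrightarrow> B i j \<le> bdist b (p i) (p j)"
    using Nb_attained[OF assms(1)] .
  from of_int_le_iff[where 'a = real, THEN iffD2, OF code_length_bound[OF this]]
  have "2 * Q * S \<le> real (Nb F b M B) * D"
    unfolding Q_def m_def D_def S_def by (simp add: algebra_simps)
  moreover have "0 \<le> D"
  proof -
    have "1 \<le> Q"
      using finite_UNIV_card_ge_0[where 'a = 'a]
      unfolding Q_def by (simp add: Suc_le_eq)
    have "real m \<le> real m ^ 2"
      by (cases m) (simp_all add: power2_eq_square)
    then have "real m * (Q - real m) \<le> real m ^ 2 * (Q - 1)"
      using \<open>1 \<le> Q\<close> by (simp add: algebra_simps power2_eq_square)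
    also have "\<dots> \<le> real M ^ 2 * (Q - 1)"
      using \<open>1 \<le> Q\<close> by (intro mult_right_mono power_mono) (auto simp: m_def)
    finally show ?thesis unfolding D_def by simp
  qed
  ultimately show ?thesis
    unfolding D_def[symmetric] S_def[symmetric]
    by (cases "D = 0") (simp_all add: pos_divide_le_eq mult.commute)
qed

theorem lemma4p1:
  fixes F :: "'a::{finite,field} itself" and q b M :: nat and B :: "nat \<Rightarrow> nat \<Rightarrow> nat"
  assumes "card (UNIV :: 'a set) = q"
    and "b > 0"
  defines "S \<equiv> real (\<Sum>j<M. \<Sum>i<j. B i j)"
  defines "Q \<equiv> real q ^ b"
  shows "(M mod q ^ b = 0 \<longrightarrow>
            real (Nb F b M B) \<ge> 2 * Q / ((Q - 1) * real M ^ 2) * S)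
       \<and> (M mod q ^ b = 1 \<longrightarrow>
            real (Nb F b M B) \<ge> 2 * Q / ((Q - 1) * (real M ^ 2 - 1)) * S)
       \<and> (\<forall>m. m = M mod q ^ b \<and> 1 < m \<longrightarrow>
            real (Nb F b M B) \<ge>
              2 * Q / (real M ^ 2 * (Q - 1) - real m * (Q - real m)) * S)"
proof -
  have bound: "2 * Q / (real M ^ 2 * (Q - 1) - real m * (Q - real m)) * S \<le> real (Nb F b M B)"
    if "m = M mod q ^ b" for m
    using Nb_lower_bound[OF assms(2), where F = F and M = M and B = B] that assms(1)
    unfolding S_def Q_def by simp
  show ?thesis
  proof (intro conjI impI allI)
    assume "M mod q ^ b = 0"
    then show "2 * Q / ((Q - 1) * real M ^ 2) * S \<le> real (Nb F b M B)"
      using bound[of 0] by (simp add: mult.commute)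
  next
    assume "M mod q ^ b = 1"
    then show "2 * Q / ((Q - 1) * (real M ^ 2 - 1)) * S \<le> real (Nb F b M B)"
      using bound[of 1] by (simp add: algebra_simps)
  qed (use bound in blast)
qed

end
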